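(* Fix $0<q<1$. For every $G\in\mathcal G$ with $G\ne E$, $$-\log\Big(\frac{q}{1-q}\|G-E\|\Big)\le T_q(G)\le\frac{1-q}{q}\cdot\frac{1}{\|G-E\|}.$$
   Context: $E(t)=1-e^{-t}$, $\bar E=1-E$, $\bar G=1-G$. $\mathcal G=\{E\#F:F$ a probability distribution on $[1,\infty)\}$ with $(E\#F)(t)=\int E(t/\mu)\,dF(\mu)$. $T_q(G)=\inf\{t:\bar G(t)\ge\frac1q\bar E(t)\}$. $\|G-G'\|=\sup_t|G(t)-G'(t)|$ is the Kolmogorov–Smirnov distance. *)

theory Defs
  imports "HOL-Probability.Probability"
begin

definition Eexp :: "real \<Rightarrow> real" where
  "Eexp t = (if t < 0 then 0 else 1 - exp (- t))"

definition mix :: "real measure \<Rightarrow> real \<Rightarrow> real" where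
  "mix F t = (\<integral>\<mu>. Eexp (t / \<mu>) \<partial>F)"

definition scale_dist :: "real measure \<Rightarrow> bool" where
  "scale_dist F \<longleftrightarrow> prob_space F \<and> sets F = sets borel \<and> measure F {1..} = 1"

definition KS :: "(real \<Rightarrow> real) \<Rightarrow> (real \<Rightarrow> real) \<Rightarrow> real" where
  "KS G G' = (SUP t. \<bar>G t - G' t\<bar>)"

definition Tq :: "real \<Rightarrow> (real \<Rightarrow> real) \<Rightarrow> real" where
  "Tq q G = Inf {t. 1 - G t \<ge> (1 / q) * (1 - Eexp t)}"

end

theory Submission
  imports Defs
begin

(*
  For mu >= 1 and t >= 0, monotonicity and convexity of exp give
  0 <= exp(-t/mu) - exp(-t) <= 1 - 1/mu, and 1 + x <= exp x gives
  exp t * exp(-t/mu) >= 1 + t (1 - 1/mu). Integrating over F, with G = E#F and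
  m = 1 - (integral of 1/mu dF), yields 0 <= E(t) - G(t) <= m and exp t * (1 - G(t)) >= 1 + t m.
  Hence 0 < ||G - E|| <= m, and t = (1 - q)/(q m) satisfies the defining inequality
  1 - G(t) >= (1 - E(t))/q of T_q(G), which gives the upper bound. Conversely, every t
  satisfying it has ||G - E|| >= E(t) - G(t) >= (1/q - 1) exp(-t), which gives the lower bound.
*)

lemma exp_mult_le_convex_comb:
  fixes a x :: real
  assumes "0 \<le> a" "a \<le> 1"
  shows "exp (a * x) \<le> 1 - a + a * exp x"
proof -
  have "exp ((1 - a) *\<^sub>R 0 + a *\<^sub>R x) \<le> (1 - a) * exp 0 + a * exp x"
    using assms by (intro convex_onD[OF exp_convex]) auto
  then show ?thesis by simp
qed

lemma exp_minus_le_exp_minus_divide: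
  fixes t \<mu> :: real
  assumes "1 \<le> \<mu>" "0 \<le> t"
  shows "exp (- t) \<le> exp (- t / \<mu>)"
  using assms mult_left_mono[OF assms] by (simp add: divide_le_eq)

lemma exp_minus_divide_le:
  fixes t \<mu> :: real
  assumes "1 \<le> \<mu>"
  shows "exp (- t / \<mu>) \<le> 1 - 1 / \<mu> + exp (- t)"
proof -
  have "exp (1 / \<mu> * - t) \<le> 1 - 1 / \<mu> + 1 / \<mu> * exp (- t)"
    using assms by (intro exp_mult_le_convex_comb) auto
  also have "\<dots> \<le> 1 - 1 / \<mu> + exp (- t)"
    using assms by (simp add: divide_le_eq)
  finally show ?thesis by simp
qed

lemma one_plus_le_exp_mult_exp_minus_divide:
  fixes t \<mu> :: real
  shows "1 + t * (1 - 1 / \<mu>) \<le> exp t * exp (- t / \<mu>)"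
proof -
  have "1 + t * (1 - 1 / \<mu>) \<le> exp (t * (1 - 1 / \<mu>))"
    by (rule exp_ge_add_one_self)
  also have "\<dots> = exp t * exp (- t / \<mu>)"
    by (simp add: exp_add[symmetric] algebra_simps)
  finally show ?thesis .
qed

lemma Eexp_nonneg: "0 \<le> Eexp t"
  by (simp add: Eexp_def)

lemma Eexp_eq_0: "t < 0 \<Longrightarrow> Eexp t = 0"
  by (simp add: Eexp_def)

lemma one_minus_Eexp: "0 \<le> t \<Longrightarrow> 1 - Eexp t = exp (- t)"
  by (simp add: Eexp_def)

lemma mix_nonneg: "0 \<le> mix F t"
  unfolding mix_def by (intro integral_nonneg_AE) (simp add: Eexp_nonneg)

lemma abs_le_KS:
  assumes "bdd_above (range (\<lambda>t. \<bar>G t - G' t\<bar>))"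
  shows "\<bar>G t - G' t\<bar> \<le> KS G G'"
  unfolding KS_def by (rule cSUP_upper[OF _ assms]) simp

lemma KS_le:
  assumes "\<And>t. \<bar>G t - G' t\<bar> \<le> B"
  shows "KS G G' \<le> B"
  unfolding KS_def by (rule cSUP_least) (auto intro: assms)

lemma KS_pos:
  assumes "bdd_above (range (\<lambda>t. \<bar>G t - G' t\<bar>))" and "G \<noteq> G'"
  shows "0 < KS G G'"
proof -
  obtain t where "G t \<noteq> G' t"
    using assms(2) by blast
  then show ?thesis
    using abs_le_KS[OF assms(1), of t] by linarith
qed

lemma Tq_condition_imp_nonneg:
  assumes "0 < q" "q < 1" "\<And>t. 0 \<le> G t" "1 - G t \<ge> (1 / q) * (1 - Eexp t)"
  shows "0 \<le> t"
proof (rule ccontr)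
  assume "\<not> 0 \<le> t"
  then have "1 / q \<le> 1"
    using assms(3)[of t] assms(4) by (simp add: Eexp_eq_0)
  with assms(1,2) show False
    by (simp add: field_simps)
qed

lemma Tq_le:
  assumes "0 < q" "q < 1" "\<And>t. 0 \<le> G t" "1 - G t \<ge> (1 / q) * (1 - Eexp t)"
  shows "Tq q G \<le> t"
  unfolding Tq_def
proof (rule cInf_lower)
  show "bdd_below {t. 1 - G t \<ge> (1 / q) * (1 - Eexp t)}"
    using Tq_condition_imp_nonneg[of q G] assms(1-3) by (intro bdd_belowI[where m = 0]) auto
qed (use assms(4) in simp)

lemma Tq_ge_minus_ln_KS:
  assumes "0 < q" "q < 1" "\<And>t. 0 \<le> G t"
    and bdd: "bdd_above (range (\<lambda>t. \<bar>G t - Eexp t\<bar>))"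
    and ex: "\<exists>t. 1 - G t \<ge> (1 / q) * (1 - Eexp t)"
  shows "- ln (q / (1 - q) * KS G Eexp) \<le> Tq q G"
  unfolding Tq_def
proof (rule cInf_greatest)
  fix t assume "t \<in> {t. 1 - G t \<ge> (1 / q) * (1 - Eexp t)}"
  then have t: "1 - G t \<ge> (1 / q) * (1 - Eexp t)" by simp
  have "0 \<le> t"
    using assms(1-3) t by (rule Tq_condition_imp_nonneg)
  then have "G t \<le> 1 - exp (- t) / q"
    using t by (simp add: one_minus_Eexp)
  moreover have "exp (- t) * ((1 - q) / q) = exp (- t) / q - exp (- t)"
    using assms(1) by (simp add: field_simps)
  ultimately have "exp (- t) * ((1 - q) / q) \<le> Eexp t - G t"
    using one_minus_Eexp[OF \<open>0 \<le> t\<close>] by linarith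
  also have "\<dots> \<le> KS G Eexp"
    using abs_le_KS[OF bdd, of t] by simp
  finally have "exp (- t) \<le> q / (1 - q) * KS G Eexp"
    using assms(1,2) by (simp add: field_simps)
  then have "- t \<le> ln (q / (1 - q) * KS G Eexp)"
    using assms(1,2) by (subst ln_ge_iff) (auto intro: less_le_trans[OF exp_gt_zero])
  then show "- ln (q / (1 - q) * KS G Eexp) \<le> t" by linarith
qed (use ex in auto)

locale scale_mixture = prob_space F for F :: "real measure" +
  assumes sets_F: "sets F = sets borel"
    and AE_one_le: "AE \<mu> in F. 1 \<le> \<mu>"
begin

definition mix_survival :: "real \<Rightarrow> real" where
  "mix_survival t = (\<integral>\<mu>. exp (- t / \<mu>) \<partial>F)"

definition scale_gap :: real where
  "scale_gap = (\<integral>\<mu>. (1 - 1 / \<mu>) \<partial>F)"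

lemma borel_measurable_F_iff:
  fixes f :: "real \<Rightarrow> real"
  shows "f \<in> borel_measurable F \<longleftrightarrow> f \<in> borel_measurable borel"
  by (simp add: measurable_cong_sets[OF sets_F refl])

lemma integrable_bounded_borel:
  fixes f :: "real \<Rightarrow> real"
  assumes "f \<in> borel_measurable borel" and "AE \<mu> in F. norm (f \<mu>) \<le> B"
  shows "integrable F f"
proof (rule integrable_const_bound[OF assms(2)])
  show "f \<in> borel_measurable F"
    using assms(1) by (simp only: borel_measurable_F_iff)
qed

lemma integrable_exp_minus_divide: "0 \<le> t \<Longrightarrow> integrable F (\<lambda>\<mu>. exp (- t / \<mu>))"
  by (rule integrable_bounded_borel[where B = 1])
    (use AE_one_le in \<open>auto elim!: eventually_mono\<close>)

lemma integrable_inverse: "integrable F (\<lambda>\<mu>. 1 / \<mu>)"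
  by (rule integrable_bounded_borel[where B = 1])
    (use AE_one_le in \<open>auto elim!: eventually_mono\<close>)

lemma borel_measurable_Eexp_divide: "(\<lambda>\<mu>. Eexp (t / \<mu>)) \<in> borel_measurable F"
  unfolding borel_measurable_F_iff Eexp_def by measurable

lemma one_minus_mix: "0 \<le> t \<Longrightarrow> 1 - mix F t = mix_survival t"
proof -
  assume "0 \<le> t"
  have "mix F t = (\<integral>\<mu>. (1 - exp (- t / \<mu>)) \<partial>F)"
    unfolding mix_def
  proof (rule integral_cong_AE[OF borel_measurable_Eexp_divide])
    show "(\<lambda>\<mu>. 1 - exp (- t / \<mu>)) \<in> borel_measurable F"
      unfolding borel_measurable_F_iff by measurable
    show "AE \<mu> in F. Eexp (t / \<mu>) = 1 - exp (- t / \<mu>)"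
      using AE_one_le by eventually_elim (use \<open>0 \<le> t\<close> in \<open>simp add: Eexp_def divide_less_0_iff\<close>)
  qed
  then show ?thesis
    using integrable_exp_minus_divide[OF \<open>0 \<le> t\<close>] by (simp add: mix_survival_def prob_space)
qed

lemma exp_minus_le_mix_survival:
  assumes "0 \<le> t"
  shows "exp (- t) \<le> mix_survival t"
proof -
  have "(\<integral>\<mu>. exp (- t) \<partial>F) \<le> mix_survival t"
    unfolding mix_survival_def
  proof (rule integral_mono_AE)
    show "integrable F (\<lambda>\<mu>. exp (- t / \<mu>))"
      using assms by (rule integrable_exp_minus_divide)
    show "AE \<mu> in F. exp (- t) \<le> exp (- t / \<mu>)"
      using AE_one_le by eventually_elim (rule exp_minus_le_exp_minus_divide[OF _ assms])
  qed simp
  then show ?thesis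
    by (simp add: prob_space)
qed

lemma mix_survival_minus_exp_le:
  assumes "0 \<le> t"
  shows "mix_survival t - exp (- t) \<le> scale_gap"
proof -
  have "mix_survival t \<le> (\<integral>\<mu>. (1 - 1 / \<mu> + exp (- t)) \<partial>F)"
    unfolding mix_survival_def
  proof (rule integral_mono_AE)
    show "integrable F (\<lambda>\<mu>. exp (- t / \<mu>))"
      using assms by (rule integrable_exp_minus_divide)
    show "integrable F (\<lambda>\<mu>. 1 - 1 / \<mu> + exp (- t))"
      using integrable_inverse by simp
    show "AE \<mu> in F. exp (- t / \<mu>) \<le> 1 - 1 / \<mu> + exp (- t)"
      using AE_one_le by eventually_elim (rule exp_minus_divide_le)
  qed
  then show ?thesis
    using integrable_inverse by (simp add: scale_gap_def prob_space)
qed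

lemma one_plus_le_exp_mult_mix_survival:
  assumes "0 \<le> t"
  shows "1 + t * scale_gap \<le> exp t * mix_survival t"
proof -
  have "(\<integral>\<mu>. (1 + t * (1 - 1 / \<mu>)) \<partial>F) \<le> (\<integral>\<mu>. exp t * exp (- t / \<mu>) \<partial>F)"
  proof (rule integral_mono)
    show "integrable F (\<lambda>\<mu>. 1 + t * (1 - 1 / \<mu>))"
      using integrable_inverse by simp
    show "integrable F (\<lambda>\<mu>. exp t * exp (- t / \<mu>))"
      using integrable_exp_minus_divide[OF assms] by simp
  qed (rule one_plus_le_exp_mult_exp_minus_divide)
  then show ?thesis
    using integrable_inverse by (simp add: mix_survival_def scale_gap_def prob_space)
qed

lemma mix_eq_0:
  assumes "t < 0"
  shows "mix F t = 0"
proof -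
  have "mix F t = (\<integral>\<mu>. 0 \<partial>F)"
    unfolding mix_def
  proof (rule integral_cong_AE[OF borel_measurable_Eexp_divide])
    show "AE \<mu> in F. Eexp (t / \<mu>) = 0"
      using AE_one_le by eventually_elim (use assms in \<open>simp add: Eexp_eq_0 divide_neg_pos\<close>)
  qed simp
  then show ?thesis
    by simp
qed

lemma abs_mix_minus_Eexp_le: "\<bar>mix F t - Eexp t\<bar> \<le> scale_gap"
proof (cases "t < 0")
  case True
  have "0 \<le> scale_gap"
    using mix_survival_minus_exp_le[of 0] by (simp add: mix_survival_def prob_space)
  with True show ?thesis
    by (simp add: mix_eq_0 Eexp_eq_0)
next
  case False
  then have "0 \<le> t" by simp
  then show ?thesis
    using exp_minus_le_mix_survival[OF \<open>0 \<le> t\<close>] mix_survival_minus_exp_le[OF \<open>0 \<le> t\<close>]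
      one_minus_mix[OF \<open>0 \<le> t\<close>] one_minus_Eexp[OF \<open>0 \<le> t\<close>]
    by linarith
qed

lemma Tq_condition_mixI:
  assumes "0 < q" "0 \<le> t" "1 / q \<le> 1 + t * scale_gap"
  shows "(1 / q) * (1 - Eexp t) \<le> 1 - mix F t"
proof -
  have "1 / q \<le> exp t * mix_survival t"
    using assms(3) one_plus_le_exp_mult_mix_survival[OF assms(2)] by linarith
  then have "(1 / q) / exp t \<le> mix_survival t"
    by (subst pos_divide_le_eq) (auto simp: mult.commute)
  then have "(1 / q) * exp (- t) \<le> mix_survival t"
    by (simp add: exp_minus divide_inverse)
  then show ?thesis
    using assms(2) by (simp add: one_minus_mix one_minus_Eexp)
qed

end

lemma scale_mixture_if_scale_dist:
  assumes "scale_dist F"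
  shows "scale_mixture F"
proof -
  interpret prob_space F
    using assms by (simp add: scale_dist_def)
  have "AE \<mu> in F. \<mu> \<in> {1..}"
    using assms by (subst AE_in_set_eq_1) (auto simp: scale_dist_def)
  then show ?thesis
    using assms by unfold_locales (auto simp: scale_dist_def)
qed

theorem lemma4p4:
  fixes q :: real and F :: "real measure"
  assumes "0 < q" and "q < 1"
    and "scale_dist F"
    and "mix F \<noteq> Eexp"
  shows "- ln (q / (1 - q) * KS (mix F) Eexp) \<le> Tq q (mix F)
       \<and> Tq q (mix F) \<le> (1 - q) / q * (1 / KS (mix F) Eexp)"
proof -
  interpret scale_mixture F
    using \<open>scale_dist F\<close> by (rule scale_mixture_if_scale_dist)
  define t where "t = (1 - q) / (q * scale_gap)"
  have bdd: "bdd_above (range (\<lambda>t. \<bar>mix F t - Eexp t\<bar>))"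
    using abs_mix_minus_Eexp_le by (intro bdd_aboveI2)
  have KS_mix_pos: "0 < KS (mix F) Eexp"
    using bdd \<open>mix F \<noteq> Eexp\<close> by (rule KS_pos)
  have KS_mix_le_gap: "KS (mix F) Eexp \<le> scale_gap"
    using abs_mix_minus_Eexp_le by (rule KS_le)
  have "0 \<le> t" and "1 / q = 1 + t * scale_gap"
    using assms(1,2) KS_mix_pos KS_mix_le_gap by (auto simp: t_def field_simps)
  then have t: "(1 / q) * (1 - Eexp t) \<le> 1 - mix F t"
    using assms(1) by (intro Tq_condition_mixI) auto
  have "Tq q (mix F) \<le> t"
    using assms(1,2) mix_nonneg t by (rule Tq_le)
  also have "t = (1 - q) / q * (1 / scale_gap)"
    by (simp add: t_def)
  also have "\<dots> \<le> (1 - q) / q * (1 / KS (mix F) Eexp)"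
    using assms(1,2) KS_mix_pos KS_mix_le_gap by (intro mult_left_mono divide_left_mono) auto
  finally show ?thesis
    using Tq_ge_minus_ln_KS[OF assms(1,2) mix_nonneg bdd] t by blast
qed

end
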